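(* Let $y_D$ be a real random variable with continuous cumulative distribution function $F$, let $\gamma\in[0.5,1)\cap\mathbb{Q}$ with irreducible fraction $\gamma=\frac{n_1}{n_2}$, and let $\epsilon\in(0,1)$, $\rho\in(0,1)$. Let $z_{\rho/2}$ denote the upper $\frac{\rho}{2}$-quantile of the standard Gaussian distribution. Set $$k=\left\lceil\left(\frac{z_{\rho/2}\sqrt{\gamma-\gamma^2}}{2\epsilon\sqrt{n_2}}+\sqrt{\left(\frac{z_{\rho/2}\sqrt{\gamma-\gamma^2}}{2\epsilon\sqrt{n_2}}\right)^2+\frac{2(\gamma-0.5)z_{\rho/2}^2}{3n_2\epsilon}+\frac{1+\gamma}{3n_2\epsilon}}\right)^2\right\rceil,\qquad N=kn_2,$$ let $y_{D,1},\dots,y_{D,N}$ be i.i.d. copies of $y_D$ with order statistics $y_{D,(1)}\le\dots\le y_{D,(N)}$, and let $\tilde J_D=y_{D,(N\gamma)}$. Assume the following confidence-interval hypothesis for $X\sim\mathrm{Beta}(N\gamma,N+1-N\gamma)$: $$\mathrm{prob}\{\gamma-\epsilon_l\le X\le \gamma+\epsilon_u\}\ge 1-\rho,$$ where $$\epsilon_u=\frac{\sqrt{\gamma-\gamma^2}}{\sqrt N}z_{\rho/2}+\frac{2(0.5-\gamma)z_{\rho/2}^2-1-\gamma}{3N},\qquad \epsilon_l=\frac{\sqrt{\gamma-\gamma^2}}{\sqrt N}z_{\rho/2}-\frac{2(0.5-\gamma)z_{\rho/2}^2-1-\gamma}{3N}.$$ Then $$\mathrm{prob}\{|F(\tilde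 J_D)-\gamma|\le\epsilon\}\ge 1-\rho .$$
   Context: For a finite sample $\{x_i\}_{i=1}^N$, the order statistics $x_{(1)}\le\dots\le x_{(N)}$ are the sample values sorted increasingly. The irreducible fraction of a rational $\gamma$ is $\gamma=n_1/n_2$ with $n_1,n_2$ coprime positive integers. Known fact that may be used: if $y_{D,(m)}$ is the $m$th order statistic of $N$ i.i.d. samples with continuous CDF $F$, then $F(y_{D,(m)})\sim\mathrm{Beta}(m,N+1-m)$. In the paper, the confidence-interval hypothesis on the Beta variable is taken from an asymptotic (normal-approximation) result valid up to terms of order $N^{-3/2}$; here it is stated as an explicit assumption. *)

theory Defs
  imports "HOL-Probability.Probability"
begin

definition std_normal_measure :: "real measure" where
  "std_normal_measure = density lborel (\<lambda>x. ennreal (std_normal_density x))"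

definition beta_density :: "real \<Rightarrow> real \<Rightarrow> real \<Rightarrow> real" where
  "beta_density a b x =
     (if 0 < x \<and> x < 1 then x powr (a - 1) * (1 - x) powr (b - 1) / Beta a b else 0)"

definition beta_measure :: "real \<Rightarrow> real \<Rightarrow> real measure" where
  "beta_measure a b = density lborel (\<lambda>x. ennreal (beta_density a b x))"

text \<open>m-th order statistic (1-based) of a finite sample given as a list.\<close>
definition order_stat :: "real list \<Rightarrow> nat \<Rightarrow> real" where
  "order_stat xs m = sort xs ! (m - 1)"

end

theory Submission
  imports Defs
begin

text \<open>The normal-approximation interval for the Beta variable has half-widths
  \<open>\<epsilon>\<^sub>u \<le> \<epsilon>\<^sub>l\<close> (the correction term is non-positive for \<open>\<gamma> \<ge> 1/2\<close>), and \<open>\<epsilon>\<^sub>l \<le> \<epsilon>\<close> is,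
  after multiplying by \<open>N / \<epsilon>\<close>, a quadratic inequality in \<open>\<surd>k\<close>; the choice of \<open>k\<close>
  puts \<open>\<surd>k\<close> beyond its larger root.  Since \<open>N\<gamma> = k n\<^sub>1\<close> is an integer, \<open>F(J\<^sub>D)\<close> is
  Beta distributed and the confidence interval, contained in \<open>[\<gamma> - \<epsilon>, \<gamma> + \<epsilon>]\<close>,
  carries probability at least \<open>1 - \<rho>\<close>.\<close>

lemma larger_root_pos:
  fixes A B :: real
  assumes "0 < B"
  shows "0 < A + sqrt (A\<^sup>2 + B)"
proof -
  have "\<bar>A\<bar> = sqrt (A\<^sup>2)" by simp
  also have "\<dots> < sqrt (A\<^sup>2 + B)" using assms by (simp only: real_sqrt_less_iff)
  finally show ?thesis by linarith
qed

lemma quadratic_ge_beyond_larger_root: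
  fixes A B t :: real
  assumes "0 < B" and "A + sqrt (A\<^sup>2 + B) \<le> t"
  shows "2 * A * t + B \<le> t\<^sup>2"
proof -
  define s where "s = sqrt (A\<^sup>2 + B)"
  have s2: "s\<^sup>2 = A\<^sup>2 + B" unfolding s_def using assms(1) by (simp add: add_nonneg_pos)
  have "\<bar>A\<bar> < s"
    using larger_root_pos[OF assms(1), of A] larger_root_pos[OF assms(1), of "- A"]
    unfolding s_def by simp
  then have "0 \<le> (t - (A + s)) * (t - (A - s))"
    using assms(2) unfolding s_def[symmetric] by (intro mult_nonneg_nonneg) auto
  then show ?thesis using s2 by (simp add: algebra_simps power2_eq_square)
qed

lemma ci_half_width_le:
  fixes a z c \<epsilon> n k :: real
  assumes n: "0 < n" and \<epsilon>: "0 < \<epsilon>" and c: "c < 0"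
    and k: "(z * a / (2 * \<epsilon> * sqrt n) + sqrt ((z * a / (2 * \<epsilon> * sqrt n))\<^sup>2 - c / (3 * n * \<epsilon>)))\<^sup>2 \<le> k"
  shows "a / sqrt (k * n) * z - c / (3 * (k * n)) \<le> \<epsilon>"
proof -
  define A where "A = z * a / (2 * \<epsilon> * sqrt n)"
  define B where "B = - c / (3 * n * \<epsilon>)"
  have B: "0 < B" unfolding B_def using n \<epsilon> c by (simp add: divide_neg_pos)
  define t where "t = sqrt k"
  have R: "0 < A + sqrt (A\<^sup>2 + B)" using larger_root_pos[OF B] .
  have kR: "(A + sqrt (A\<^sup>2 + B))\<^sup>2 \<le> k" using k unfolding A_def B_def by simp
  then have tR: "A + sqrt (A\<^sup>2 + B) \<le> t" unfolding t_def using R real_le_rsqrt by blast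
  have kpos: "0 < k" using kR R by (smt (verit) zero_less_power)
  have t: "0 < t" and t2: "t\<^sup>2 = k" unfolding t_def using kpos by simp_all
  have "a / sqrt (k * n) * z - c / (3 * (k * n)) = \<epsilon> * (2 * A * t + B) / k"
    unfolding A_def B_def t2[symmetric] using t n \<epsilon>
    by (simp add: real_sqrt_mult field_simps power2_eq_square)
  also have "\<dots> \<le> \<epsilon> * t\<^sup>2 / k"
    using quadratic_ge_beyond_larger_root[OF B tR] \<epsilon> kpos
    by (intro divide_right_mono mult_left_mono) auto
  also have "\<dots> = \<epsilon>" using t2 kpos by simp
  finally show ?thesis .
qed

text \<open>Measurability of the order statistic is not among the hypotheses.\<close>

lemma emeasure_distr_if_nonzero:
  assumes "emeasure (distr M N f) I \<noteq> 0" and "A \<in> sets N"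
  shows "emeasure (distr M N f) A = emeasure M (f -` A \<inter> space M)"
proof -
  have sig: "sigma_sets (space N) (sets N) = sets N"
    by (rule sigma_algebra.sigma_sets_eq[OF sets.sigma_algebra_axioms])
  have e: "emeasure (distr M N f) = (\<lambda>B. if B \<in> sigma_sets (space N) (sets N)
      \<and> measure_space (space N) (sigma_sets (space N) (sets N)) (\<lambda>A. emeasure M (f -` A \<inter> space M))
      then emeasure M (f -` B \<inter> space M) else 0)"
    unfolding distr_def by (rule emeasure_measure_of_conv)
  from assms(1) show ?thesis using assms(2) unfolding e sig by (auto split: if_splits)
qed

lemma (in prob_space) measure_preimage_ge_of_distr:
  assumes le: "p \<le> measure (distr M N f) I" and p: "0 < p"
    and sub: "I \<subseteq> S" and S: "S \<in> sets N"
  shows "p \<le> measure M (f -` S \<inter> space M)"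
proof -
  have "emeasure (distr M N f) I \<noteq> 0" using le p by (auto simp: measure_def)
  then have eq: "emeasure (distr M N f) S = emeasure M (f -` S \<inter> space M)"
    using emeasure_distr_if_nonzero S by blast
  have "emeasure (distr M N f) I \<le> emeasure M (f -` S \<inter> space M)"
    unfolding eq[symmetric] using sub S by (intro emeasure_mono) auto
  then have "measure (distr M N f) I \<le> measure M (f -` S \<inter> space M)"
    unfolding measure_def by (intro enn2real_mono) (auto simp: emeasure_eq_measure)
  then show ?thesis using le by linarith
qed

lemma ci_within_eps_of_sample_size:
  fixes \<gamma> \<epsilon> z :: real and n2 k :: nat
  assumes \<gamma>: "1/2 \<le> \<gamma>" and \<epsilon>: "0 < \<epsilon>" and n2: "0 < n2"
    and k: "k = nat \<lceil>(z * sqrt (\<gamma> - \<gamma>\<^sup>2) / (2 * \<epsilon> * sqrt (real n2))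
                 + sqrt ((z * sqrt (\<gamma> - \<gamma>\<^sup>2) / (2 * \<epsilon> * sqrt (real n2)))\<^sup>2
                         + 2 * (\<gamma> - 1/2) * z\<^sup>2 / (3 * real n2 * \<epsilon>)
                         + (1 + \<gamma>) / (3 * real n2 * \<epsilon>)))\<^sup>2\<rceil>"
  defines "c \<equiv> 2 * (1/2 - \<gamma>) * z\<^sup>2 - 1 - \<gamma>"
    and "w \<equiv> sqrt (\<gamma> - \<gamma>\<^sup>2) / sqrt (real (k * n2)) * z"
  shows "1 \<le> k" and "\<gamma> - \<epsilon> \<le> \<gamma> - (w - c / (3 * real (k * n2)))"
    and "\<gamma> + (w + c / (3 * real (k * n2))) \<le> \<gamma> + \<epsilon>"
proof -
  define A where "A = z * sqrt (\<gamma> - \<gamma>\<^sup>2) / (2 * \<epsilon> * sqrt (real n2))"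
  have c: "c < 0" unfolding c_def using \<gamma> mult_left_mono[of 0 "z\<^sup>2" "\<gamma> - 1/2"]
    by (simp add: algebra_simps)
  have "2 * (\<gamma> - 1/2) * z\<^sup>2 / (3 * real n2 * \<epsilon>) + (1 + \<gamma>) / (3 * real n2 * \<epsilon>)
      = - c / (3 * real n2 * \<epsilon>)" unfolding c_def by (simp add: divide_simps) (simp add: algebra_simps)
  then have k_root: "k = nat \<lceil>(A + sqrt (A\<^sup>2 - c / (3 * real n2 * \<epsilon>)))\<^sup>2\<rceil>"
    unfolding k A_def by (simp add: add.assoc)
  have "0 < - c / (3 * real n2 * \<epsilon>)" using c n2 \<epsilon> by (simp add: divide_neg_pos)
  then have "0 < A + sqrt (A\<^sup>2 - c / (3 * real n2 * \<epsilon>))"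
    using larger_root_pos[of "- c / (3 * real n2 * \<epsilon>)" A] by simp
  then show "1 \<le> k" unfolding k_root by (simp add: Suc_le_eq)
  have "w - c / (3 * real (k * n2)) \<le> \<epsilon>"
    using ci_half_width_le[OF _ \<epsilon> c] n2 k_root unfolding A_def w_def by simp
  then show "\<gamma> - \<epsilon> \<le> \<gamma> - (w - c / (3 * real (k * n2)))" by simp
  have "c / (3 * real (k * n2)) \<le> 0" using c by (simp add: divide_nonpos_nonneg)
  then show "\<gamma> + (w + c / (3 * real (k * n2))) \<le> \<gamma> + \<epsilon>"
    using \<open>w - c / _ \<le> \<epsilon>\<close> by simp
qed

theorem theorem2:
  fixes M :: "'a measure"
    and yD :: "'a \<Rightarrow> real"
    and Y :: "nat \<Rightarrow> 'a \<Rightarrow> real"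
    and F :: "real \<Rightarrow> real"
    and n1 n2 :: nat
    and \<gamma> \<epsilon> \<rho> z :: real
    and k N :: nat
  assumes M: "prob_space M"
    and yD_rv: "yD \<in> borel_measurable M"
    and F_cdf: "F = cdf (distr M borel yD)"
    and F_cont: "continuous_on UNIV F"
    and n_pos: "0 < n1" "0 < n2"
    and n_coprime: "coprime n1 n2"
    and gamma_def: "\<gamma> = real n1 / real n2"
    and gamma_range: "1/2 \<le> \<gamma>" "\<gamma> < 1"
    and eps_range: "0 < \<epsilon>" "\<epsilon> < 1"
    and rho_range: "0 < \<rho>" "\<rho> < 1"
    and z_quantile: "measure std_normal_measure {z<..} = \<rho> / 2"
    and k_def: "k = nat \<lceil>(z * sqrt (\<gamma> - \<gamma>\<^sup>2) / (2 * \<epsilon> * sqrt (real n2))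
                 + sqrt ((z * sqrt (\<gamma> - \<gamma>\<^sup>2) / (2 * \<epsilon> * sqrt (real n2)))\<^sup>2
                         + 2 * (\<gamma> - 1/2) * z\<^sup>2 / (3 * real n2 * \<epsilon>)
                         + (1 + \<gamma>) / (3 * real n2 * \<epsilon>)))\<^sup>2\<rceil>"
    and N_def: "N = k * n2"
    and Y_rv: "\<And>i. i < N \<Longrightarrow> Y i \<in> borel_measurable M"
    and Y_ident: "\<And>i. i < N \<Longrightarrow> distr M borel (Y i) = distr M borel yD"
    and Y_indep: "prob_space.indep_vars M (\<lambda>_. borel) Y {..<N}"
    and known_fact:
      "\<And>m. 1 \<le> m \<Longrightarrow> m \<le> N \<Longrightarrow>
         distr M borel (\<lambda>\<omega>. F (order_stat (map (\<lambda>i. Y i \<omega>) [0..<N]) m))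
           = beta_measure (real m) (real N + 1 - real m)"
    and beta_CI:
      "let \<epsilon>u = sqrt (\<gamma> - \<gamma>\<^sup>2) / sqrt (real N) * z
                  + (2 * (1/2 - \<gamma>) * z\<^sup>2 - 1 - \<gamma>) / (3 * real N);
           \<epsilon>l = sqrt (\<gamma> - \<gamma>\<^sup>2) / sqrt (real N) * z
                  - (2 * (1/2 - \<gamma>) * z\<^sup>2 - 1 - \<gamma>) / (3 * real N)
       in measure (beta_measure (real N * \<gamma>) (real N + 1 - real N * \<gamma>))
            {\<gamma> - \<epsilon>l .. \<gamma> + \<epsilon>u} \<ge> 1 - \<rho>"
  shows "measure M {\<omega> \<in> space M.
           \<bar>F (order_stat (map (\<lambda>i. Y i \<omega>) [0..<N]) (N * n1 div n2)) - \<gamma>\<bar> \<le> \<epsilon>}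
         \<ge> 1 - \<rho>"
proof -
  note CI_bounds = ci_within_eps_of_sample_size[OF gamma_range(1) eps_range(1) n_pos(2) k_def,
      folded N_def]
  have n12: "n1 < n2" using gamma_def gamma_range(2) n_pos by (simp add: divide_less_eq)
  have idx: "N * n1 div n2 = k * n1" "real (k * n1) = real N * \<gamma>"
    using N_def n_pos gamma_def by (simp_all add: field_simps)
  have "distr M borel (\<lambda>\<omega>. F (order_stat (map (\<lambda>i. Y i \<omega>) [0..<N]) (k * n1)))
      = beta_measure (real N * \<gamma>) (real N + 1 - real N * \<gamma>)"
    using known_fact[of "k * n1"] CI_bounds(1) n_pos n12 N_def unfolding idx(2) by simp
  then have "1 - \<rho> \<le> measure M ((\<lambda>\<omega>. F (order_stat (map (\<lambda>i. Y i \<omega>) [0..<N]) (k * n1)))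
      -` {\<gamma> - \<epsilon> .. \<gamma> + \<epsilon>} \<inter> space M)"
    using beta_CI rho_range CI_bounds(2,3) unfolding Let_def
    by (intro prob_space.measure_preimage_ge_of_distr[OF M, where N = borel]) auto
  also have "\<dots> = measure M {\<omega> \<in> space M.
      \<bar>F (order_stat (map (\<lambda>i. Y i \<omega>) [0..<N]) (N * n1 div n2)) - \<gamma>\<bar> \<le> \<epsilon>}"
    unfolding idx(1) by (rule arg_cong[where f = "measure M"]) (auto simp: abs_le_iff)
  finally show ?thesis .
qed

end
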